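(* Let $t$ and $i$ be integers with $t \geq 1$ and $0 \leq i < t$, and suppose there exists a Hadamard matrix of order $4t+4i$. Then there exists a binary code (not necessarily linear) $C \subseteq \{0,1\}^{4t}$ of length $4t$ with exactly $8t+8i$ codewords and minimum distance at least $2t-2i$, i.e. any two distinct codewords of $C$ are at Hamming distance at least $2t-2i$.
   Context: A Hadamard matrix of order $n$ is an $n \times n$ matrix $H$ with entries in $\{\pm 1\}$ satisfying $HH^{\top} = nI_n$. A binary code of length $m$ is a subset of $\{0,1\}^m$; its minimum distance is the minimum Hamming distance between two distinct codewords. *)

theory Defs
  imports Main
begin

definition hadamard :: "nat \<Rightarrow> (nat \<Rightarrow> nat \<Rightarrow> int) \<Rightarrow> bool" where
  "hadamard n H \<longleftrightarrow>
     (\<forall>i<n. \<forall>j<n. H i j = 1 \<or> H i j = -1) \<and>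
     (\<forall>i<n. \<forall>k<n. (\<Sum>j<n. H i j * H k j) = (if i = k then int n else 0))"

definition hadamard_exists :: "nat \<Rightarrow> bool" where
  "hadamard_exists n \<longleftrightarrow> (\<exists>H. hadamard n H)"

definition hamming_dist :: "bool list \<Rightarrow> bool list \<Rightarrow> nat" where
  "hamming_dist x y = card {k. k < length x \<and> x ! k \<noteq> y ! k}"

definition binary_code :: "nat \<Rightarrow> bool list set \<Rightarrow> bool" where
  "binary_code m C \<longleftrightarrow> (\<forall>c\<in>C. length c = m)"

end

theory Submission
  imports Defs
begin

text \<open>The rows of a Hadamard matrix of order \<open>N = 4t + 4i\<close> together with their negatives,
  read as \<open>\<plusminus>1\<close>-words, form \<open>2N\<close> words of length \<open>N\<close> at pairwise distance at least \<open>N/2\<close>: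
  distinct rows of \<open>H\<close> are orthogonal, hence differ in exactly \<open>N/2\<close> places, and a row differs
  from its negative everywhere. Deleting the last \<open>4i\<close> coordinates lowers every distance by at
  most \<open>4i\<close>, leaving distance at least \<open>2t - 2i > 0\<close>; in particular the \<open>2N\<close> punctured words
  stay distinct.\<close>

lemma hadamard_rows_differ_half:
  assumes H: "hadamard N H" and r: "r < N" and k: "k < N" and "r \<noteq> k"
  shows "2 * card {j. j < N \<and> H r j = H k j} = N"
    and "2 * card {j. j < N \<and> H r j \<noteq> H k j} = N"
proof -
  define A where "A = {j. j < N \<and> H r j = H k j}"
  define D where "D = {j. j < N \<and> H r j \<noteq> H k j}"
  have pm: "H r j = 1 \<or> H r j = -1" "H k j = 1 \<or> H k j = -1" if "j < N" for j
    using H r k that unfolding hadamard_def by auto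
  have fin: "finite A" "finite D" and disj: "A \<inter> D = {}" and split: "{..<N} = A \<union> D"
    unfolding A_def D_def by auto
  have "0 = (\<Sum>j<N. H r j * H k j)"
    using H r k \<open>r \<noteq> k\<close> unfolding hadamard_def by auto
  also have "\<dots> = (\<Sum>j\<in>A. H r j * H k j) + (\<Sum>j\<in>D. H r j * H k j)"
    using split sum.union_disjoint[OF fin disj] by simp
  also have "\<dots> = (\<Sum>j\<in>A. 1) + (\<Sum>j\<in>D. -1)"
    by (intro arg_cong2[where f = "(+)"] sum.cong) (use pm in \<open>force simp: A_def D_def\<close>)+
  finally have "card A = card D" by simp
  moreover have "card A + card D = N"
    using card_Un_disjoint[OF fin disj] split by (metis card_lessThan)
  ultimately show "2 * card A = N" "2 * card D = N" by linarith+
qed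

lemma hamming_dist_map_upt:
  "hamming_dist (map f [0..<m]) (map g [0..<m]) = card {j. j < m \<and> f j \<noteq> g j}"
  unfolding hamming_dist_def by (intro arg_cong[where f = card]) auto

lemma card_less_le_card_less_add_diff:
  fixes P :: "nat \<Rightarrow> bool"
  shows "card {j. j < N \<and> P j} \<le> card {j. j < m \<and> P j} + (N - m)"
proof -
  have "card {j. j < N \<and> P j} \<le> card ({j. j < m \<and> P j} \<union> {m..<N})"
    by (intro card_mono) auto
  also have "\<dots> \<le> card {j. j < m \<and> P j} + card {m..<N}"
    by (rule card_Un_le)
  finally show ?thesis by simp
qed

text \<open>Coordinate \<open>j\<close> of the word of row \<open>r\<close> is \<open>H r j = 1\<close>; the flag \<open>b = False\<close> negates the row.\<close>

definition hadamard_word :: "(nat \<Rightarrow> nat \<Rightarrow> int) \<Rightarrow> nat \<Rightarrow> nat \<times> bool \<Rightarrow> bool list" where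
  "hadamard_word H m = (\<lambda>(r, b). map (\<lambda>j. (H r j = 1) = b) [0..<m])"

lemma hadamard_word_length [simp]: "length (hadamard_word H m p) = m"
  by (simp add: hadamard_word_def split: prod.splits)

lemma hadamard_words_far:
  assumes H: "hadamard N H" and "m \<le> N"
    and p: "p \<in> {..<N} \<times> UNIV" and q: "q \<in> {..<N} \<times> UNIV" and "p \<noteq> q"
  shows "N \<le> 2 * hamming_dist (hadamard_word H m p) (hadamard_word H m q) + 2 * (N - m)"
proof -
  obtain r b k c where pq: "p = (r, b)" "q = (k, c)" and r: "r < N" and k: "k < N"
    using p q by auto
  define P where "P j \<longleftrightarrow> (H r j = H k j) = (b \<noteq> c)" for j
  have "N \<le> 2 * card {j. j < N \<and> P j}"
  proof (cases "r = k")
    case True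
    with \<open>p \<noteq> q\<close> pq have "{j. j < N \<and> P j} = {..<N}" by (auto simp: P_def)
    then show ?thesis by simp
  next
    case False
    from hadamard_rows_differ_half[OF H r k False] show ?thesis
      by (cases "b = c") (simp_all add: P_def)
  qed
  also have "card {j. j < N \<and> P j} \<le> card {j. j < m \<and> P j} + (N - m)"
    by (rule card_less_le_card_less_add_diff)
  also have "{j. j < m \<and> P j} = {j. j < m \<and> ((H r j = 1) = b) \<noteq> ((H k j = 1) = c)}"
  proof -
    have "H r j = 1 \<or> H r j = -1" "H k j = 1 \<or> H k j = -1" if "j < m" for j
      using H r k that \<open>m \<le> N\<close> unfolding hadamard_def by auto
    then show ?thesis unfolding P_def by fastforce
  qed
  finally show ?thesis
    by (simp add: hadamard_word_def pq hamming_dist_map_upt)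
qed

theorem theorem2:
  fixes t i :: nat
  assumes "t \<ge> 1" and "i < t"
    and "hadamard_exists (4*t + 4*i)"
  shows "\<exists>C. binary_code (4*t) C \<and> finite C \<and> card C = 8*t + 8*i \<and>
           (\<forall>x\<in>C. \<forall>y\<in>C. x \<noteq> y \<longrightarrow> hamming_dist x y \<ge> 2*t - 2*i)"
proof -
  obtain H where H: "hadamard (4*t + 4*i) H"
    using assms(3) unfolding hadamard_exists_def by blast
  define I where "I = {..<4*t + 4*i} \<times> (UNIV :: bool set)"
  define w where "w = hadamard_word H (4*t)"
  have far: "2*t - 2*i \<le> hamming_dist (w p) (w q)" if "p \<in> I" "q \<in> I" "p \<noteq> q" for p q
    using hadamard_words_far[OF H, of "4*t" p q] that unfolding I_def w_def by simp
  have "inj_on w I"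
  proof (rule inj_onI)
    fix p q assume "p \<in> I" "q \<in> I" "w p = w q"
    then show "p = q"
      using far[of p q] \<open>i < t\<close> unfolding hamming_dist_def by fastforce
  qed
  then have "card (w ` I) = 8*t + 8*i"
    by (simp add: card_image I_def card_cartesian_product)
  moreover have "binary_code (4*t) (w ` I)" "finite (w ` I)"
    by (auto simp: binary_code_def w_def I_def)
  moreover have "\<forall>x\<in>w ` I. \<forall>y\<in>w ` I. x \<noteq> y \<longrightarrow> 2*t - 2*i \<le> hamming_dist x y"
    using far by fastforce
  ultimately show ?thesis by blast
qed

end
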